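(* For every integer $n\ge 1$, there is no tiling of the $3\times 3\times n$ box by bricks of size $1\times 2\times 2$.
   Context: A tiling of a $k\times m\times n$ box (made of $kmn$ unit cubes) by $a\times b\times c$ bricks is a partition of the box into non-overlapping axis-parallel boxes with integer corner coordinates, each congruent (by an axis-permuting placement) to the $a\times b\times c$ brick; all orientations are allowed. *)

theory Defs
  imports Main
begin

text \<open>Unit cubes are identified with their lower corners, integer triples (x,y,z);
  the cube with corner (x,y,z) is [x,x+1]x[y,y+1]x[z,z+1].\<close>

type_synonym cell = "int \<times> int \<times> int"

definition box_cells :: "int \<Rightarrow> int \<Rightarrow> int \<Rightarrow> nat \<Rightarrow> nat \<Rightarrow> nat \<Rightarrow> cell set" where
  "box_cells x y z p q r = {x..<x + int p} \<times> {y..<y + int q} \<times> {z..<z + int r}"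

definition is_brick :: "nat \<Rightarrow> nat \<Rightarrow> nat \<Rightarrow> cell set \<Rightarrow> bool" where
  "is_brick a b c B \<longleftrightarrow>
     (\<exists>x y z p q r. B = box_cells x y z p q r \<and>
        (p, q, r) \<in> {(a,b,c), (a,c,b), (b,a,c), (b,c,a), (c,a,b), (c,b,a)})"

definition tiles :: "nat \<Rightarrow> nat \<Rightarrow> nat \<Rightarrow> nat \<Rightarrow> nat \<Rightarrow> nat \<Rightarrow> cell set set \<Rightarrow> bool" where
  "tiles k m n a b c T \<longleftrightarrow>
     (\<forall>B\<in>T. is_brick a b c B) \<and>
     (\<forall>B\<in>T. \<forall>B'\<in>T. B \<noteq> B' \<longrightarrow> B \<inter> B' = {}) \<and>
     \<Union>T = box_cells 0 0 0 k m n"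

definition tileable :: "nat \<Rightarrow> nat \<Rightarrow> nat \<Rightarrow> nat \<Rightarrow> nat \<Rightarrow> nat \<Rightarrow> bool" where
  "tileable k m n a b c \<longleftrightarrow> (\<exists>T. tiles k m n a b c T)"

end

theory Submission
  imports Defs
begin

text \<open>Colour the cell (x,y,z) by the sign (-1)^(x+y), a checkerboard in the first two
  coordinates. A brick with two even sides has an even side along the x- or y-axis, so
  its cells have total colour 0; a tiling therefore forces the whole box to have total
  colour 0. But a box with odd sides along the x- and y-axes has total colour equal to
  its height, since each odd by odd layer has one more cell of colour 1 than of colour -1.\<close>

definition parity_sign :: "int \<Rightarrow> int" where
  "parity_sign a = (if even a then 1 else -1)"

definition checkerboard :: "cell \<Rightarrow> int" where
  "checkerboard c = (case c of (x, y, _) \<Rightarrow> parity_sign x * parity_sign y)"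

lemma sum_parity_sign_interval:
  "(\<Sum>a\<in>{x..<x + int p}. parity_sign a) = (if even p then 0 else parity_sign x)"
proof (induction p)
  case 0
  then show ?case by simp
next
  case (Suc p)
  have "{x..<x + int (Suc p)} = insert (x + int p) {x..<x + int p}"
    by auto
  then have "(\<Sum>a\<in>{x..<x + int (Suc p)}. parity_sign a)
      = parity_sign (x + int p) + (\<Sum>a\<in>{x..<x + int p}. parity_sign a)"
    by simp
  with Suc.IH show ?case
    by (auto simp: parity_sign_def)
qed

lemma sum_checkerboard_box_cells:
  "sum checkerboard (box_cells x y z p q r)
     = (\<Sum>a\<in>{x..<x + int p}. parity_sign a) * (\<Sum>b\<in>{y..<y + int q}. parity_sign b) * int r"
proof -
  have "sum checkerboard (box_cells x y z p q r)
      = (\<Sum>a\<in>{x..<x + int p}. \<Sum>b\<in>{y..<y + int q}. \<Sum>c\<in>{z..<z + int r}. parity_sign a * parity_sign b)"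
    unfolding box_cells_def sum.cartesian_product' checkerboard_def by simp
  also have "\<dots> = int r * (\<Sum>a\<in>{x..<x + int p}. \<Sum>b\<in>{y..<y + int q}. parity_sign a * parity_sign b)"
    by (simp add: sum_distrib_left)
  finally show ?thesis
    by (simp add: sum_product mult.commute)
qed

lemma sum_checkerboard_brick:
  assumes "is_brick a b c B" and "even b" and "even c"
  shows "sum checkerboard B = 0"
proof -
  obtain x y z p q r where B: "B = box_cells x y z p q r" and "even p \<or> even q"
    using assms unfolding is_brick_def by auto
  then show ?thesis
    by (auto simp: sum_checkerboard_box_cells sum_parity_sign_interval)
qed

lemma sum_over_tiling:
  assumes "tiles k m n a b c T"
  shows "sum f (box_cells 0 0 0 k m n) = (\<Sum>B\<in>T. sum f B)"
proof -
  have bricks: "\<forall>B\<in>T. is_brick a b c B"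
    and disjoint: "\<forall>B\<in>T. \<forall>B'\<in>T. B \<noteq> B' \<longrightarrow> B \<inter> B' = {}"
    and union: "\<Union>T = box_cells 0 0 0 k m n"
    using assms unfolding tiles_def by auto
  have "\<forall>B\<in>T. finite B"
    using bricks unfolding is_brick_def box_cells_def by auto
  then show ?thesis
    using sum.Union_disjoint[OF _ disjoint] union by simp
qed

theorem not_tileable_odd_odd_box:
  assumes "odd k" and "odd m" and "n \<ge> 1" and "even b" and "even c"
  shows "\<not> tileable k m n a b c"
proof
  assume "tileable k m n a b c"
  then obtain T where T: "tiles k m n a b c T"
    unfolding tileable_def by blast
  have "\<forall>B\<in>T. is_brick a b c B"
    using T unfolding tiles_def by blast
  then have "\<forall>B\<in>T. sum checkerboard B = 0"
    using sum_checkerboard_brick \<open>even b\<close> \<open>even c\<close> by blast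
  then have "sum checkerboard (box_cells 0 0 0 k m n) = 0"
    by (simp add: sum_over_tiling[OF T])
  moreover have "sum checkerboard (box_cells 0 0 0 k m n) = int n"
    using \<open>odd k\<close> \<open>odd m\<close> sum_parity_sign_interval[of 0 k] sum_parity_sign_interval[of 0 m]
    by (simp add: sum_checkerboard_box_cells parity_sign_def)
  ultimately show False
    using \<open>n \<ge> 1\<close> by simp
qed

theorem mainTheorem16:
  fixes n :: nat
  assumes "n \<ge> 1"
  shows "\<not> tileable 3 3 n 1 2 2"
  using not_tileable_odd_odd_box[of 3 3 n 2 2 1] assms by simp

end
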